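(* Let $\theta\in\mathbb{R}$, $q=e^{2\pi i\theta}$, let $A_\theta$ be the unital $\mathbb{C}$-algebra generated by invertible $U,V$ with $UV=qVU$, and let $R=\mathbb{C}[U,U^{-1}]\subset A_\theta$ with $\mathfrak s=\mathfrak t:R\to A_\theta$ the inclusion. Define $\Delta(U^nV^m)=U^nV^m\otimes_R V^m$ and $\varepsilon(U^nV^m)=U^n$ (extended linearly). Then: (1) $(A_\theta,\mathfrak s,\mathfrak t,\Delta,\varepsilon)$ is a left $\times_R$-Hopf algebra, i.e. a left $R$-bialgebroid for which $\nu:A_\theta\otimes_{R^{op}}A_\theta\to A_\theta\otimes_R A_\theta$, $k\otimes k'\mapsto k_{(1)}\otimes_R k_{(2)}k'$, is bijective; (2) the map $\delta:A_\theta\to R$, $\delta(U^nV^m)=q^{nm}U^n$, is a right character; (3) $R$ with the right action $U^k\triangleleft U^nV^m=q^{(k+n)m}U^{k+n}$ and the coaction $U^n\mapsto U^n\otimes_R1$ is a right-left SAYD module ${}^1R_\delta$ over $A_\theta$.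
   Context: A left $R$-bialgebroid is a $\mathbb{C}$-algebra $\mathcal K$ with algebra maps $\mathfrak s:R\to\mathcal K$, $\mathfrak t:R^{op}\to\mathcal K$ with commuting ranges, $R$-bimodule structure $r_1\cdot k\cdot r_2=\mathfrak s(r_1)\mathfrak t(r_2)k$, and $R$-bimodule maps $\Delta(k)=k_{(1)}\otimes_R k_{(2)}$, $\varepsilon:\mathcal K\to R$ forming a coassociative counital $R$-coring, with $k_{(1)}\mathfrak t(r)\otimes_R k_{(2)}=k_{(1)}\otimes_R k_{(2)}\mathfrak s(r)$, $\Delta(1)=1\otimes_R1$, $\Delta(kk')=k_{(1)}k'_{(1)}\otimes_R k_{(2)}k'_{(2)}$, $\varepsilon(1)=1_R$, $\varepsilon(kk')=\varepsilon(k\mathfrak s(\varepsilon(k')))$. It is a left $\times_R$-Hopf algebra if $\nu$ (domain balanced by $k\mathfrak t(r)\otimes k'=k\otimes\mathfrak t(r)k'$) is bijective; write $\nu^{-1}(k\otimes_R1)=k^-\otimes_{R^{op}}k^+$. A right character is a map $\delta:\mathcal K\to R$ with $\delta(k\mathfrak s(r))=\delta(k)r$, $\delta(k_1k_2)=\delta(\mathfrak s(\delta(k_1))k_2)$, $\delta(1)=1_R$. A right-left SAYD module over $\mathcal K$: a right $\mathcal K$-module and left $\mathcal K$-comodule $M$ (coaction $m\mapsto m_{(-1)}\otimes_R m_{(0)}$, left $R$-linear, coassociative, counital) with left $R$-action $r\cdot m=m\mathfrak t(r)$ and $\varepsilon(m_{(-1)}\mathfrak s(r))\cdot m_{(0)}=m\mathfrak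 s(r)$, satisfying $(mk)_{(-1)}\otimes_R(mk)_{(0)}=k_{(2)}{}^{+}m_{(-1)}k_{(1)}\otimes_R m_{(0)}k_{(2)}{}^{-}$ and $m_{(0)}m_{(-1)}=m$. *)

theory Defs
  imports Complex_Main "HOL-Library.Product_Lexorder"
begin

definition fsupp :: "('a \<Rightarrow> complex) \<Rightarrow> 'a set" where
  "fsupp f = {x. f x \<noteq> 0}"

definition finsupp :: "('a \<Rightarrow> complex) set" where
  "finsupp = {f. finite (fsupp f)}"

definition mon :: "'a \<Rightarrow> 'a \<Rightarrow> complex" where
  "mon p = (\<lambda>x. if x = p then 1 else 0)"

definition linext :: "('a \<Rightarrow> 'c \<Rightarrow> complex) \<Rightarrow> ('a \<Rightarrow> complex) \<Rightarrow> 'c \<Rightarrow> complex" where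
  "linext F f = (\<lambda>z. \<Sum>p\<in>fsupp f. f p * F p z)"

definition bilext :: "('a \<Rightarrow> 'b \<Rightarrow> 'c \<Rightarrow> complex) \<Rightarrow> ('a \<Rightarrow> complex) \<Rightarrow> ('b \<Rightarrow> complex) \<Rightarrow> 'c \<Rightarrow> complex" where
  "bilext F f g = (\<lambda>z. \<Sum>p\<in>fsupp f. \<Sum>p'\<in>fsupp g. f p * g p' * F p p' z)"

definition lsum :: "('a \<Rightarrow> complex) list \<Rightarrow> 'a \<Rightarrow> complex" where
  "lsum xs = (\<lambda>z. \<Sum>f\<leftarrow>xs. f z)"

section \<open>The noncommutative torus A_theta and R = C[U,U^-1]\<close>

text \<open>An element of A_theta is the coefficient function (n,m) \<mapsto> coefficient of U^n V^m;
  an element of R is the coefficient function n \<mapsto> coefficient of U^n.\<close>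
type_synonym alg = "int \<times> int \<Rightarrow> complex"
type_synonym base = "int \<Rightarrow> complex"

definition Alg :: "alg set" where "Alg = finsupp"
definition Base :: "base set" where "Base = finsupp"

definition qq :: "real \<Rightarrow> complex" where "qq \<theta> = cis (2 * pi * \<theta>)"

text \<open>U^n V^m * U^k V^l = q^(-mk) U^(n+k) V^(m+l), since UV = qVU.\<close>
definition amul :: "real \<Rightarrow> alg \<Rightarrow> alg \<Rightarrow> alg" where
  "amul \<theta> = bilext (\<lambda>(n, m) (k, l). \<lambda>z. qq \<theta> powi (- (m * k)) * mon (n + k, m + l) z)"

definition aone :: alg where "aone = mon (0, 0)"

definition rmul :: "base \<Rightarrow> base \<Rightarrow> base" where
  "rmul = bilext (\<lambda>a b. mon (a + b))"

definition rone :: base where "rone = mon 0"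

text \<open>the inclusion R \<subseteq> A_theta; s = t = incl\<close>
definition incl :: "base \<Rightarrow> alg" where
  "incl = linext (\<lambda>n. mon (n, 0))"

definition eps :: "alg \<Rightarrow> base" where
  "eps = linext (\<lambda>(n, m). mon n)"

text \<open>Representatives of elements of tensor products: lists of pure tensors.
  A tensor of coefficient functions is the coefficient function on the product basis.\<close>
definition tens :: "('a \<Rightarrow> complex) \<Rightarrow> ('b \<Rightarrow> complex) \<Rightarrow> 'a \<times> 'b \<Rightarrow> complex" where
  "tens f g = (\<lambda>(x, y). f x * g y)"

definition emb :: "(('a \<Rightarrow> complex) \<times> ('b \<Rightarrow> complex)) list \<Rightarrow> 'a \<times> 'b \<Rightarrow> complex" where
  "emb xs = (\<lambda>z. \<Sum>p\<leftarrow>xs. tens (fst p) (snd p) z)"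

definition emb3 :: "(('a \<Rightarrow> complex) \<times> ('b \<Rightarrow> complex) \<times> ('c \<Rightarrow> complex)) list
                    \<Rightarrow> 'a \<times> 'b \<times> 'c \<Rightarrow> complex" where
  "emb3 xs = emb (map (\<lambda>(a, b, c). (a, tens b c)) xs)"

inductive_set cspan :: "('a \<Rightarrow> complex) set \<Rightarrow> ('a \<Rightarrow> complex) set" for G where
  zero: "(\<lambda>_. 0) \<in> cspan G"
| add: "g \<in> G \<Longrightarrow> x \<in> cspan G \<Longrightarrow> (\<lambda>z. c * g z + x z) \<in> cspan G"

text \<open>equality in a balanced tensor product = difference lies in the span of the balancing relations\<close>
definition teq :: "('a \<times> 'b \<Rightarrow> complex) set \<Rightarrow> (('a \<Rightarrow> complex) \<times> ('b \<Rightarrow> complex)) list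
                   \<Rightarrow> (('a \<Rightarrow> complex) \<times> ('b \<Rightarrow> complex)) list \<Rightarrow> bool" where
  "teq G xs ys \<longleftrightarrow> (\<lambda>z. emb xs z - emb ys z) \<in> cspan G"

definition teq3 :: "('a \<times> 'b \<times> 'c \<Rightarrow> complex) set
                   \<Rightarrow> (('a \<Rightarrow> complex) \<times> ('b \<Rightarrow> complex) \<times> ('c \<Rightarrow> complex)) list
                   \<Rightarrow> (('a \<Rightarrow> complex) \<times> ('b \<Rightarrow> complex) \<times> ('c \<Rightarrow> complex)) list \<Rightarrow> bool" where
  "teq3 G xs ys \<longleftrightarrow> (\<lambda>z. emb3 xs z - emb3 ys z) \<in> cspan G"

text \<open>A \<otimes>_R A : k t(r) \<otimes> k' ... the R-bimodule structure is r1.k.r2 = s(r1) t(r2) k, so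
  the relation is  t(r) k \<otimes> k' = k \<otimes> s(r) k'.\<close>
definition balR :: "real \<Rightarrow> ((int \<times> int) \<times> (int \<times> int) \<Rightarrow> complex) set" where
  "balR \<theta> = {(\<lambda>z. tens (amul \<theta> (incl r) k) k' z - tens k (amul \<theta> (incl r) k') z)
              | r k k'. r \<in> Base \<and> k \<in> Alg \<and> k' \<in> Alg}"

definition balRop :: "real \<Rightarrow> ((int \<times> int) \<times> (int \<times> int) \<Rightarrow> complex) set" where
  "balRop \<theta> = {(\<lambda>z. tens (amul \<theta> k (incl r)) k' z - tens k (amul \<theta> (incl r) k') z)
              | r k k'. r \<in> Base \<and> k \<in> Alg \<and> k' \<in> Alg}"

definition balRR :: "real \<Rightarrow> ((int \<times> int) \<times> (int \<times> int) \<times> (int \<times> int) \<Rightarrow> complex) set" where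
  "balRR \<theta> =
     {(\<lambda>z. tens (amul \<theta> (incl r) k) (tens k' k'') z - tens k (tens (amul \<theta> (incl r) k') k'') z)
       | r k k' k''. r \<in> Base \<and> k \<in> Alg \<and> k' \<in> Alg \<and> k'' \<in> Alg}
   \<union> {(\<lambda>z. tens k (tens (amul \<theta> (incl r) k') k'') z - tens k (tens k' (amul \<theta> (incl r) k'')) z)
       | r k k' k''. r \<in> Base \<and> k \<in> Alg \<and> k' \<in> Alg \<and> k'' \<in> Alg}"

definition tlist :: "(('a \<Rightarrow> complex) \<times> ('b \<Rightarrow> complex)) list \<Rightarrow> bool" where
  "tlist xs \<longleftrightarrow> (\<forall>p\<in>set xs. fst p \<in> finsupp \<and> snd p \<in> finsupp)"

definition delta :: "alg \<Rightarrow> (alg \<times> alg) list" where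
  "delta f = map (\<lambda>p. ((\<lambda>z. f p * mon p z), mon (0, snd p))) (sorted_list_of_set (fsupp f))"

definition nu :: "real \<Rightarrow> (alg \<times> alg) list \<Rightarrow> (alg \<times> alg) list" where
  "nu \<theta> xs = concat (map (\<lambda>(k, k'). map (\<lambda>(a, b). (a, amul \<theta> b k')) (delta k)) xs)"

definition left_bialgebroid_Atheta :: "real \<Rightarrow> bool" where
  "left_bialgebroid_Atheta \<theta> \<longleftrightarrow>
    \<comment> \<open>s = incl : R \<rightarrow> A and t = incl : R^op \<rightarrow> A are algebra maps with commuting ranges\<close>
    incl rone = aone \<and>
    (\<forall>r\<in>Base. \<forall>r'\<in>Base. incl (rmul r r') = amul \<theta> (incl r) (incl r')) \<and>
    (\<forall>r\<in>Base. \<forall>r'\<in>Base. incl (rmul r r') = amul \<theta> (incl r') (incl r)) \<and>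
    (\<forall>r\<in>Base. \<forall>r'\<in>Base. amul \<theta> (incl r) (incl r') = amul \<theta> (incl r') (incl r)) \<and>
    \<comment> \<open>Delta and epsilon are R-bimodule maps\<close>
    (\<forall>k\<in>Alg. \<forall>r1\<in>Base. \<forall>r2\<in>Base.
       teq (balR \<theta>) (delta (amul \<theta> (amul \<theta> (incl r1) (incl r2)) k))
                    (map (\<lambda>(a, b). (amul \<theta> (incl r1) a, amul \<theta> (incl r2) b)) (delta k))) \<and>
    (\<forall>k\<in>Alg. \<forall>r1\<in>Base. \<forall>r2\<in>Base.
       eps (amul \<theta> (amul \<theta> (incl r1) (incl r2)) k) = rmul (rmul r1 (eps k)) r2) \<and>
    \<comment> \<open>coassociativity\<close>
    (\<forall>k\<in>Alg.
       teq3 (balRR \<theta>)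
         (concat (map (\<lambda>(a, b). map (\<lambda>(c, d). (c, d, b)) (delta a)) (delta k)))
         (concat (map (\<lambda>(a, b). map (\<lambda>(c, d). (a, c, d)) (delta b)) (delta k)))) \<and>
    \<comment> \<open>counitality: epsilon(k_(1)).k_(2) = k = k_(1).epsilon(k_(2))\<close>
    (\<forall>k\<in>Alg. lsum (map (\<lambda>(a, b). amul \<theta> (incl (eps a)) b) (delta k)) = k) \<and>
    (\<forall>k\<in>Alg. lsum (map (\<lambda>(a, b). amul \<theta> (incl (eps b)) a) (delta k)) = k) \<and>
    \<comment> \<open>Takeuchi condition k_(1) t(r) \<otimes> k_(2) = k_(1) \<otimes> k_(2) s(r)\<close>
    (\<forall>k\<in>Alg. \<forall>r\<in>Base.
       teq (balR \<theta>) (map (\<lambda>(a, b). (amul \<theta> a (incl r), b)) (delta k))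
                    (map (\<lambda>(a, b). (a, amul \<theta> b (incl r))) (delta k))) \<and>
    teq (balR \<theta>) (delta aone) [(aone, aone)] \<and>
    (\<forall>k\<in>Alg. \<forall>k'\<in>Alg.
       teq (balR \<theta>) (delta (amul \<theta> k k'))
         (concat (map (\<lambda>(a, b). map (\<lambda>(a', b'). (amul \<theta> a a', amul \<theta> b b')) (delta k')) (delta k)))) \<and>
    eps aone = rone \<and>
    (\<forall>k\<in>Alg. \<forall>k'\<in>Alg. eps (amul \<theta> k k') = eps (amul \<theta> k (incl (eps k'))))"

definition left_Hopf_Atheta :: "real \<Rightarrow> bool" where
  "left_Hopf_Atheta \<theta> \<longleftrightarrow>
    left_bialgebroid_Atheta \<theta> \<and>
    \<comment> \<open>nu : A \<otimes>_{R^op} A \<rightarrow> A \<otimes>_R A is well defined, injective and surjective\<close>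
    (\<forall>xs ys. tlist xs \<and> tlist ys \<and> teq (balRop \<theta>) xs ys \<longrightarrow> teq (balR \<theta>) (nu \<theta> xs) (nu \<theta> ys)) \<and>
    (\<forall>xs ys. tlist xs \<and> tlist ys \<and> teq (balR \<theta>) (nu \<theta> xs) (nu \<theta> ys) \<longrightarrow> teq (balRop \<theta>) xs ys) \<and>
    (\<forall>ys. tlist ys \<longrightarrow> (\<exists>xs. tlist xs \<and> teq (balR \<theta>) (nu \<theta> xs) ys))"

definition chi :: "real \<Rightarrow> alg \<Rightarrow> base" where
  "chi \<theta> = linext (\<lambda>(n, m). \<lambda>z. qq \<theta> powi (n * m) * mon n z)"

definition right_character_Atheta :: "real \<Rightarrow> (alg \<Rightarrow> base) \<Rightarrow> bool" where
  "right_character_Atheta \<theta> d \<longleftrightarrow>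
    (\<forall>k\<in>Alg. \<forall>r\<in>Base. d (amul \<theta> k (incl r)) = rmul (d k) r) \<and>
    (\<forall>k1\<in>Alg. \<forall>k2\<in>Alg. d (amul \<theta> k1 k2) = d (amul \<theta> (incl (d k1)) k2)) \<and>
    d aone = rone"

definition act :: "real \<Rightarrow> base \<Rightarrow> alg \<Rightarrow> base" where
  "act \<theta> = bilext (\<lambda>j (n, m). \<lambda>z. qq \<theta> powi ((j + n) * m) * mon (j + n) z)"

definition coact :: "base \<Rightarrow> (alg \<times> base) list" where
  "coact m = map (\<lambda>n. ((\<lambda>z. m n * mon (n, 0) z), rone)) (sorted_list_of_set (fsupp m))"

text \<open>A \<otimes>_R M, with r.m = m t(r):  t(r) k \<otimes> m = k \<otimes> m \<triangleleft> t(r)\<close>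
definition balKM :: "real \<Rightarrow> ((int \<times> int) \<times> int \<Rightarrow> complex) set" where
  "balKM \<theta> = {(\<lambda>z. tens (amul \<theta> (incl r) k) m z - tens k (act \<theta> m (incl r)) z)
              | r k m. r \<in> Base \<and> k \<in> Alg \<and> m \<in> Base}"

definition balKKM :: "real \<Rightarrow> ((int \<times> int) \<times> (int \<times> int) \<times> int \<Rightarrow> complex) set" where
  "balKKM \<theta> =
     {(\<lambda>z. tens (amul \<theta> (incl r) k) (tens k' m) z - tens k (tens (amul \<theta> (incl r) k') m) z)
       | r k k' m. r \<in> Base \<and> k \<in> Alg \<and> k' \<in> Alg \<and> m \<in> Base}
   \<union> {(\<lambda>z. tens k (tens (amul \<theta> (incl r) k') m) z - tens k (tens k' (act \<theta> m (incl r))) z)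
       | r k k' m. r \<in> Base \<and> k \<in> Alg \<and> k' \<in> Alg \<and> m \<in> Base}"

definition SAYD_Atheta :: "real \<Rightarrow> (base \<Rightarrow> alg \<Rightarrow> base) \<Rightarrow> (base \<Rightarrow> (alg \<times> base) list) \<Rightarrow> bool" where
  "SAYD_Atheta \<theta> ac co \<longleftrightarrow>
    \<comment> \<open>right A-module\<close>
    (\<forall>m\<in>Base. ac m aone = m) \<and>
    (\<forall>m\<in>Base. \<forall>k\<in>Alg. \<forall>k'\<in>Alg. ac (ac m k) k' = ac m (amul \<theta> k k')) \<and>
    \<comment> \<open>left A-comodule: coaction left R-linear (r.m = m t(r)), coassociative, counital\<close>
    (\<forall>m\<in>Base. tlist (co m)) \<and>
    (\<forall>m\<in>Base. \<forall>r\<in>Base.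
       teq (balKM \<theta>) (co (ac m (incl r))) (map (\<lambda>(a, b). (amul \<theta> (incl r) a, b)) (co m))) \<and>
    (\<forall>m\<in>Base.
       teq3 (balKKM \<theta>)
         (concat (map (\<lambda>(a, b). map (\<lambda>(c, d). (c, d, b)) (delta a)) (co m)))
         (concat (map (\<lambda>(a, b). map (\<lambda>(c, d). (a, c, d)) (co b)) (co m)))) \<and>
    (\<forall>m\<in>Base. lsum (map (\<lambda>(a, b). ac b (incl (eps a))) (co m)) = m) \<and>
    \<comment> \<open>epsilon(m_(-1) s(r)).m_(0) = m s(r)\<close>
    (\<forall>m\<in>Base. \<forall>r\<in>Base.
       lsum (map (\<lambda>(a, b). ac b (incl (eps (amul \<theta> a (incl r))))) (co m)) = ac m (incl r)) \<and>
    \<comment> \<open>anti-Yetter-Drinfeld condition, for any choice of representatives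
        tinv k = k^- \<otimes>_{R^op} k^+ of nu^{-1}(k \<otimes>_R 1)\<close>
    (\<forall>tinv. (\<forall>k\<in>Alg. tlist (tinv k) \<and> teq (balR \<theta>) (nu \<theta> (tinv k)) [(k, aone)]) \<longrightarrow>
       (\<forall>m\<in>Base. \<forall>k\<in>Alg.
          teq (balKM \<theta>) (co (ac m k))
            (concat (map (\<lambda>(k1, k2). concat (map (\<lambda>(km, kp).
                map (\<lambda>(a, b). (amul \<theta> (amul \<theta> kp a) k1, ac b km)) (co m)) (tinv k2))) (delta k))))) \<and>
    \<comment> \<open>stability m_(0) m_(-1) = m\<close>
    (\<forall>m\<in>Base. lsum (map (\<lambda>(a, b). ac b a) (co m)) = m)"

end

theory Submission
  imports Defs
begin

text \<open>
  Every element of \<open>A\<^sub>\<theta>\<close>, of \<open>R\<close> and of the (unbalanced) tensor products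
  is a finitely supported coefficient function on monomials, and every structure map is the
  (bi)linear extension \<open>linext\<close>/\<open>bilext\<close> of its values on monomials.

  With this calculus every bialgebroid, character and module identity reduces to an identity
  between monomials, i.e. to arithmetic of the exponents of \<open>q\<close>.  The two non-formal parts are:
  \<^item> the Galois map: on monomials \<open>\<nu>(U\<^sup>aV\<^sup>m \<otimes> U\<^sup>cV\<^sup>d) = q\<^sup>-\<^sup>m\<^sup>c U\<^sup>aV\<^sup>m \<otimes> U\<^sup>cV\<^sup>d\<^sup>+\<^sup>m\<close>, an invertible
    ``twist'' of coefficient functions which maps the balancing relations of \<open>\<otimes>\<^bsub>R\<^sup>o\<^sup>p\<^esub>\<close> into
    the span of those of \<open>\<otimes>\<^bsub>R\<^esub>\<close> and whose inverse does the converse; hence \<open>\<nu>\<close> is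
    well defined and bijective;
  \<^item> the anti-Yetter-Drinfeld condition: \<open>V\<^sup>j \<otimes> V\<^sup>-\<^sup>j\<close> represents \<open>\<nu>\<^sup>-\<^sup>1(V\<^sup>j \<otimes> 1)\<close>, any other
    representative differs from it by balancing relations (injectivity of \<open>\<nu>\<close>), and the
    right-hand side of the condition depends linearly on the representative, sending these
    relations to balancing relations of \<open>A\<^sub>\<theta> \<otimes>\<^bsub>R\<^esub> R\<close>; so it suffices to compute with
    the canonical representative.
\<close>

lemma fsupp_mon [simp]: "fsupp (mon p) = {p}"
  by (auto simp: fsupp_def mon_def)

lemma finsupp_mon [simp]: "mon p \<in> finsupp"
  by (simp add: finsupp_def)

lemma finsupp_zero [simp]: "(\<lambda>z. 0) \<in> finsupp"
  by (simp add: finsupp_def fsupp_def)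

lemma finsupp_scal [simp]: "g \<in> finsupp \<Longrightarrow> (\<lambda>z. c * g z) \<in> finsupp"
  by (auto simp: finsupp_def fsupp_def elim: finite_subset[rotated])

lemma finsupp_add [simp]: "a \<in> finsupp \<Longrightarrow> b \<in> finsupp \<Longrightarrow> (\<lambda>z. a z + b z) \<in> finsupp"
proof -
  have "fsupp (\<lambda>z. a z + b z) \<subseteq> fsupp a \<union> fsupp b" by (auto simp: fsupp_def)
  then show "a \<in> finsupp \<Longrightarrow> b \<in> finsupp \<Longrightarrow> ?thesis"
    by (auto simp: finsupp_def intro: finite_subset)
qed

lemma finsupp_diff [simp]: "a \<in> finsupp \<Longrightarrow> b \<in> finsupp \<Longrightarrow> (\<lambda>z. a z - b z) \<in> finsupp"
  using finsupp_add[of a "\<lambda>z. - b z"] finsupp_scal[of b "-1"] by simp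

lemma fsupp_sum: "fsupp (\<lambda>z. \<Sum>i\<in>I. g i z) \<subseteq> (\<Union>i\<in>I. fsupp (g i))"
  by (auto simp: fsupp_def intro: ccontr)

lemma finsupp_sum [simp]:
  assumes "\<And>i. g i \<in> finsupp"
  shows "(\<lambda>z. \<Sum>i\<in>I. g i z) \<in> finsupp"
proof (cases "finite I")
  case True
  then show ?thesis using assms fsupp_sum[of g I]
    by (simp add: finsupp_def) (meson finite_UN_I finite_subset)
qed (simp add: finsupp_def fsupp_def)

lemma finsupp_tens [simp]: "f \<in> finsupp \<Longrightarrow> g \<in> finsupp \<Longrightarrow> tens f g \<in> finsupp"
proof -
  have "fsupp (tens f g) \<subseteq> fsupp f \<times> fsupp g" by (auto simp: tens_def fsupp_def)
  then show "f \<in> finsupp \<Longrightarrow> g \<in> finsupp \<Longrightarrow> ?thesis"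
    by (auto simp: finsupp_def intro: finite_subset)
qed

lemma linext_superset:
  assumes "finite S" "fsupp f \<subseteq> S"
  shows "linext F f = (\<lambda>z. \<Sum>p\<in>S. f p * F p z)"
  unfolding linext_def
  by (rule ext, rule sum.mono_neutral_left) (use assms in \<open>auto simp: fsupp_def\<close>)

lemma finsupp_linext [simp]: "(\<And>p. F p \<in> finsupp) \<Longrightarrow> linext F f \<in> finsupp"
  unfolding linext_def by simp

lemma linext_mon [simp]: "linext F (mon p) = F p"
  unfolding linext_def fsupp_mon by (simp add: mon_def)

lemma linext_zero [simp]: "linext F (\<lambda>z. 0) = (\<lambda>z. 0)"
  unfolding linext_def by (simp add: fsupp_def)

lemma linext_scal [simp]: "linext G (\<lambda>z. c * g z) = (\<lambda>z. c * linext G g z)"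
proof (cases "c = 0")
  case False
  then have "fsupp (\<lambda>z. c * g z) = fsupp g" by (auto simp: fsupp_def)
  then show ?thesis by (simp add: linext_def sum_distrib_left mult.assoc)
qed (simp add: linext_def fsupp_def)

lemma linext_scal_body [simp]: "linext (\<lambda>p z. c * T p z) f = (\<lambda>z. c * linext T f z)"
  unfolding linext_def by (simp add: sum_distrib_left mult.left_commute)

lemmas linext_scal_in = linext_scal_body[symmetric]

lemma linext_mon_expansion: "g \<in> finsupp \<Longrightarrow> linext mon g = g"
  unfolding linext_def
proof (rule ext)
  fix z assume "g \<in> finsupp"
  show "(\<Sum>p\<in>fsupp g. g p * mon p z) = g z"
  proof (cases "z \<in> fsupp g")
    case True
    then show ?thesis using \<open>g \<in> finsupp\<close>
      by (simp add: mon_def finsupp_def if_distrib[of "\<lambda>x. _ * x"] cong: if_cong)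
  next
    case False
    then have "g z = 0" by (simp add: fsupp_def)
    moreover have "\<forall>p\<in>fsupp g. g p * mon p z = 0" using False by (auto simp: mon_def)
    ultimately show ?thesis by (simp add: sum.neutral)
  qed
qed

lemma linext_cong: "(\<And>p. p \<in> fsupp f \<Longrightarrow> F p = G p) \<Longrightarrow> linext F f = linext G f"
  unfolding linext_def by simp

lemma linext_linext [simp]:
  assumes "\<And>p. F p \<in> finsupp"
  shows "linext G (linext F f) = linext (\<lambda>p. linext G (F p)) f"
proof (cases "finite (fsupp f)")
  case False
  then show ?thesis by (simp add: linext_def)
next
  case True
  define S where "S = (\<Union>p\<in>fsupp f. fsupp (F p))"
  have S: "finite S" using True assms by (auto simp: S_def finsupp_def)
  have sub: "fsupp (linext F f) \<subseteq> S" unfolding linext_def S_def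
    using fsupp_sum[of "\<lambda>p z. f p * F p z" "fsupp f"] by (auto simp: fsupp_def)
  show ?thesis
  proof (rule ext)
    fix z
    have "linext G (linext F f) z = (\<Sum>s\<in>S. (\<Sum>p\<in>fsupp f. f p * F p s) * G s z)"
      using linext_superset[OF S sub, of G] by (simp add: linext_def)
    also have "\<dots> = (\<Sum>p\<in>fsupp f. f p * (\<Sum>s\<in>S. F p s * G s z))"
      by (simp add: sum_distrib_left sum_distrib_right mult.assoc sum.swap[of _ S])
    also have "\<dots> = (\<Sum>p\<in>fsupp f. f p * linext G (F p) z)"
    proof (rule sum.cong[OF refl])
      fix p assume "p \<in> fsupp f"
      then have "fsupp (F p) \<subseteq> S" by (auto simp: S_def)
      then show "f p * (\<Sum>s\<in>S. F p s * G s z) = f p * linext G (F p) z"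
        using linext_superset[OF S, of "F p" G] by simp
    qed
    finally show "linext G (linext F f) z = linext (\<lambda>p. linext G (F p)) f z"
      by (simp add: linext_def)
  qed
qed

lemma linext_diff: "(\<lambda>z. linext F f z - linext G f z) = linext (\<lambda>p z. F p z - G p z) f"
  unfolding linext_def by (simp add: sum_subtractf right_diff_distrib)

lemma linext_swap: "linext (\<lambda>p. linext (F p) g) f = linext (\<lambda>q. linext (\<lambda>p. F p q) f) g"
  unfolding linext_def
  by (rule ext) (simp add: sum_distrib_left sum.swap[of _ "fsupp f"] mult.left_commute)

text \<open>All orders of a threefold linear extension agree; used to bring both sides of an
  identity into the same normal form.\<close>
lemma linext_perm3:
  "linext (\<lambda>a. linext (\<lambda>c. linext (\<lambda>b. X a b c) g) h) f = linext (\<lambda>a. linext (\<lambda>b. linext (\<lambda>c. X a b c) h) g) f"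
  "linext (\<lambda>b. linext (\<lambda>a. linext (\<lambda>c. X a b c) h) f) g = linext (\<lambda>a. linext (\<lambda>b. linext (\<lambda>c. X a b c) h) g) f"
  "linext (\<lambda>b. linext (\<lambda>c. linext (\<lambda>a. X a b c) f) h) g = linext (\<lambda>a. linext (\<lambda>b. linext (\<lambda>c. X a b c) h) g) f"
  "linext (\<lambda>c. linext (\<lambda>a. linext (\<lambda>b. X a b c) g) f) h = linext (\<lambda>a. linext (\<lambda>b. linext (\<lambda>c. X a b c) h) g) f"
  "linext (\<lambda>c. linext (\<lambda>b. linext (\<lambda>a. X a b c) f) g) h = linext (\<lambda>a. linext (\<lambda>b. linext (\<lambda>c. X a b c) h) g) f"
  subgoal by (rule linext_cong, rule linext_swap)
  subgoal by (rule linext_swap)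
  subgoal by (rule trans, rule linext_cong, rule linext_swap, rule linext_swap)
  subgoal by (rule trans, rule linext_swap, rule linext_cong, rule linext_swap)
  subgoal by (rule trans, rule linext_swap, rule trans, rule linext_cong, rule linext_swap, rule linext_swap)
  done

text \<open>Balanced tensor products are quotients by the span of the balancing relations; we need
  that spans are closed under linear combinations and preserved by linear maps.\<close>

lemma cspan_gen: "g \<in> G \<Longrightarrow> g \<in> cspan G"
  using cspan.add[OF _ cspan.zero, of g G 1] by simp

lemma cspan_add: "x \<in> cspan G \<Longrightarrow> y \<in> cspan G \<Longrightarrow> (\<lambda>z. x z + y z) \<in> cspan G"
proof (induction x rule: cspan.induct)
  case zero then show ?case by simp
next
  case (add g x c)
  then have "(\<lambda>z. c * g z + (x z + y z)) \<in> cspan G" by (intro cspan.add) auto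
  then show ?case by (simp add: add.assoc)
qed

lemma cspan_scal: "x \<in> cspan G \<Longrightarrow> (\<lambda>z. c * x z) \<in> cspan G"
proof (induction x rule: cspan.induct)
  case zero then show ?case by (simp add: cspan.zero)
next
  case (add g x d)
  then have "(\<lambda>z. (c * d) * g z + c * x z) \<in> cspan G" by (intro cspan.add) auto
  then show ?case by (simp add: distrib_left mult.assoc)
qed

lemma cspan_sum: "(\<And>i. i \<in> I \<Longrightarrow> x i \<in> cspan G) \<Longrightarrow> (\<lambda>z. \<Sum>i\<in>I. x i z) \<in> cspan G"
proof (induction I rule: infinite_finite_induct)
  case (insert a A)
  then show ?case by (simp add: cspan_add)
qed (simp_all add: cspan.zero)

lemma cspan_linext: "(\<And>p. p \<in> fsupp f \<Longrightarrow> F p \<in> cspan G) \<Longrightarrow> linext F f \<in> cspan G"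
  unfolding linext_def by (intro cspan_sum cspan_scal)

lemma cspan_finsupp: "x \<in> cspan G \<Longrightarrow> G \<subseteq> finsupp \<Longrightarrow> x \<in> finsupp"
  by (induction x rule: cspan.induct) auto

lemma cspan_linear_image:
  assumes "x \<in> cspan G" "G \<subseteq> finsupp"
    and lin: "\<And>c g x. g \<in> finsupp \<Longrightarrow> x \<in> finsupp \<Longrightarrow> T (\<lambda>z. c * g z + x z) = (\<lambda>z. c * T g z + T x z)"
    and zero: "T (\<lambda>z. 0) = (\<lambda>z. 0)"
    and gen: "\<And>g. g \<in> G \<Longrightarrow> T g \<in> cspan H"
  shows "T x \<in> cspan H"
  using assms(1)
proof (induction x rule: cspan.induct)
  case zero then show ?case by (simp add: assms(4) cspan.zero)
next
  case (add g x c)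
  have "g \<in> finsupp" "x \<in> finsupp" using add.hyps assms(2) cspan_finsupp by auto
  then show ?case using add by (simp add: lin cspan_add cspan_scal gen)
qed

lemma linext_linear: "g \<in> finsupp \<Longrightarrow> x \<in> finsupp \<Longrightarrow>
  linext F (\<lambda>z. c * g z + x z) = (\<lambda>z. c * linext F g z + linext F x z)"
proof -
  assume g: "g \<in> finsupp" and x: "x \<in> finsupp"
  define S where "S = fsupp g \<union> fsupp x"
  have S: "finite S" using g x by (simp add: S_def finsupp_def)
  have s1: "fsupp (\<lambda>z. c * g z + x z) \<subseteq> S" by (auto simp: S_def fsupp_def)
  have s2: "fsupp g \<subseteq> S" "fsupp x \<subseteq> S" by (auto simp: S_def)
  show ?thesis
    unfolding linext_superset[OF S s1] linext_superset[OF S s2(1)] linext_superset[OF S s2(2)]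
    by (simp add: algebra_simps sum.distrib sum_distrib_left)
qed

lemma tens_linext_left [simp]: "tens (linext F f) g = linext (\<lambda>p. tens (F p) g) f"
  unfolding tens_def linext_def by (auto simp: sum_distrib_right mult.assoc)

lemma tens_linext_right [simp]: "tens g (linext F f) = linext (\<lambda>p. tens g (F p)) f"
  unfolding tens_def linext_def by (auto simp: sum_distrib_left mult.left_commute)

lemma tens_scal_left [simp]: "tens (\<lambda>z. c * g z) h = (\<lambda>z. c * tens g h z)"
  unfolding tens_def by (auto simp: mult.assoc)

lemma tens_scal_right [simp]: "tens h (\<lambda>z. c * g z) = (\<lambda>z. c * tens h g z)"
  unfolding tens_def by (auto simp: mult.left_commute)

lemma tens_mon [simp]: "tens (mon p) (mon q) = mon (p, q)"
  unfolding tens_def mon_def by auto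

lemma emb_Nil [simp]: "emb [] = (\<lambda>z. 0)"
  unfolding emb_def by simp

lemma emb_Cons: "emb (x # ys) = (\<lambda>z. tens (fst x) (snd x) z + emb ys z)"
  unfolding emb_def by simp

lemma emb_single [simp]: "emb [(a, b)] = tens a b"
  unfolding emb_def by simp

lemma emb_append: "emb (xs @ ys) = (\<lambda>z. emb xs z + emb ys z)"
  unfolding emb_def by simp

lemma emb_concat: "emb (concat L) = (\<lambda>z. \<Sum>l\<leftarrow>L. emb l z)"
  unfolding emb_def by (rule ext, induction L) auto

lemma emb_map: "emb (map h xs) = (\<lambda>z. \<Sum>x\<leftarrow>xs. tens (fst (h x)) (snd (h x)) z)"
  unfolding emb_def by (simp add: comp_def)

lemma emb_finsupp: "tlist ys \<Longrightarrow> emb ys \<in> finsupp"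
  by (induction ys) (auto simp: tlist_def emb_Cons)

lemma sum_list_sorted: "finite A \<Longrightarrow> sum_list (map g (sorted_list_of_set A)) = sum g A"
  by (simp add: sum_list_distinct_conv_sum_set)

lemma teq_of_emb_eq: "emb xs = emb ys \<Longrightarrow> teq G xs ys"
  by (simp add: teq_def cspan.zero)

lemma teq3_of_emb3_eq: "emb3 xs = emb3 ys \<Longrightarrow> teq3 G xs ys"
  by (simp add: teq3_def cspan.zero)

lemma teq_sym: "teq G xs ys \<Longrightarrow> teq G ys xs"
proof -
  assume "teq G xs ys"
  then have "(\<lambda>z. (-1) * (emb xs z - emb ys z)) \<in> cspan G"
    unfolding teq_def by (rule cspan_scal)
  then show ?thesis by (simp add: teq_def)
qed

lemma teq_trans: "teq G xs ys \<Longrightarrow> teq G ys zs \<Longrightarrow> teq G xs zs"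
proof -
  assume "teq G xs ys" "teq G ys zs"
  then have "(\<lambda>z. (emb xs z - emb ys z) + (emb ys z - emb zs z)) \<in> cspan G"
    unfolding teq_def by (rule cspan_add)
  then show ?thesis by (simp add: teq_def)
qed

text \<open>The defining formulas, with the pattern-matching abstractions replaced by projections so
  that the simplifier can evaluate them on \<open>linext\<close>-expansions.\<close>

lemma amul_linext_form:
  "amul \<theta> = bilext (\<lambda>p p' z. qq \<theta> powi (- (snd p * fst p')) * mon (fst p + fst p', snd p + snd p') z)"
  unfolding amul_def by (simp add: case_prod_unfold)

lemma eps_linext_form: "eps = linext (\<lambda>p. mon (fst p))"
  unfolding eps_def by (simp add: case_prod_unfold)

lemma chi_linext_form: "chi \<theta> = linext (\<lambda>p z. qq \<theta> powi (fst p * snd p) * mon (fst p) z)"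
  unfolding chi_def by (simp add: case_prod_unfold)

lemma act_linext_form:
  "act \<theta> = bilext (\<lambda>j p z. qq \<theta> powi ((j + fst p) * snd p) * mon (j + fst p) z)"
  unfolding act_def by (simp add: case_prod_unfold)

lemma bilext_linext: "bilext B f g = linext (\<lambda>p. linext (B p) g) f"
  unfolding bilext_def linext_def by (simp add: sum_distrib_left mult.assoc)

lemmas linext_forms = amul_linext_form rmul_def act_linext_form incl_def eps_linext_form
  chi_linext_form bilext_linext aone_def rone_def

lemma qq_nonzero [simp]: "qq \<theta> \<noteq> 0"
  by (simp add: qq_def)

lemma qq_powi_add: "qq \<theta> powi a * qq \<theta> powi b = qq \<theta> powi (a + b)"
  by (simp add: power_int_add)

lemma qq_powi_mult: "qq \<theta> powi a * (qq \<theta> powi b * x) = qq \<theta> powi (a + b) * x"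
  by (simp add: power_int_add)

lemma amul_finsupp [simp]: "amul \<theta> f g \<in> finsupp"
  by (simp add: linext_forms)

lemma act_finsupp [simp]: "act \<theta> m k \<in> finsupp"
  by (simp add: linext_forms)

lemma amul_assoc: "amul \<theta> (amul \<theta> f g) h = amul \<theta> f (amul \<theta> g h)"
  by (simp add: linext_forms linext_scal_in del: linext_scal_body, intro linext_cong ext)
     (simp add: qq_powi_mult algebra_simps)

lemma amul_linext_left: "(\<And>p. F p \<in> finsupp) \<Longrightarrow> amul \<theta> (linext F f) g = linext (\<lambda>p. amul \<theta> (F p) g) f"
  by (simp add: amul_linext_form bilext_linext)

lemma amul_linext_right: "(\<And>p. F p \<in> finsupp) \<Longrightarrow> amul \<theta> g (linext F f) = linext (\<lambda>p. amul \<theta> g (F p)) f"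
  by (simp add: amul_linext_form bilext_linext linext_swap[of _ f])

lemma amul_scal_left: "amul \<theta> (\<lambda>z. c * g z) h = (\<lambda>z. c * amul \<theta> g h z)"
  by (simp add: amul_linext_form bilext_linext)

lemma amul_scal_right: "amul \<theta> h (\<lambda>z. c * g z) = (\<lambda>z. c * amul \<theta> h g z)"
  by (simp add: amul_linext_form bilext_linext)

lemma act_linext_right: "(\<And>p. F p \<in> finsupp) \<Longrightarrow> act \<theta> g (linext F f) = linext (\<lambda>p. act \<theta> g (F p)) f"
  by (simp add: act_linext_form bilext_linext linext_swap[of _ f])

lemma act_scal_right: "act \<theta> h (\<lambda>z. c * g z) = (\<lambda>z. c * act \<theta> h g z)"
  by (simp add: act_linext_form bilext_linext)

lemmas bilinearity = amul_linext_left amul_linext_right amul_scal_left amul_scal_right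
  act_linext_right act_scal_right

lemma emb_map_delta: "f \<in> finsupp \<Longrightarrow>
  (\<And>c p. tens (fst (h (\<lambda>z. c * mon p z, mon (0, snd p)))) (snd (h (\<lambda>z. c * mon p z, mon (0, snd p))))
     = (\<lambda>z. c * tens (fst (h (mon p, mon (0, snd p)))) (snd (h (mon p, mon (0, snd p)))) z)) \<Longrightarrow>
  emb (map h (delta f)) = linext (\<lambda>p. tens (fst (h (mon p, mon (0, snd p)))) (snd (h (mon p, mon (0, snd p))))) f"
  unfolding delta_def emb_map by (simp add: sum_list_sorted finsupp_def comp_def linext_def)

lemma emb_delta: "f \<in> finsupp \<Longrightarrow> emb (delta f) = linext (\<lambda>p. mon (p, (0, snd p))) f"
  using emb_map_delta[of f id] by simp

lemma emb_concat_delta: "f \<in> finsupp \<Longrightarrow>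
  (\<And>c p. emb (g (\<lambda>z. c * mon p z, mon (0, snd p))) = (\<lambda>z. c * emb (g (mon p, mon (0, snd p))) z)) \<Longrightarrow>
  emb (concat (map g (delta f))) = linext (\<lambda>p. emb (g (mon p, mon (0, snd p)))) f"
  unfolding emb_concat delta_def by (simp add: comp_def sum_list_sorted finsupp_def linext_def)

lemma lsum_map_delta: "f \<in> finsupp \<Longrightarrow>
  (\<And>c p. g (\<lambda>z. c * mon p z, mon (0, snd p)) = (\<lambda>z. c * g (mon p, mon (0, snd p)) z)) \<Longrightarrow>
  lsum (map g (delta f)) = linext (\<lambda>p. g (mon p, mon (0, snd p))) f"
  unfolding lsum_def delta_def by (simp add: comp_def sum_list_sorted finsupp_def linext_def)

lemmas expand_simps = linext_forms emb_map_delta emb_concat_delta emb_delta lsum_map_delta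
  mult.left_commute

section \<open>\<open>A\<^sub>\<theta>\<close> is a left \<open>R\<close>-bialgebroid\<close>

lemma incl_rone: "incl rone = aone"
  by (simp add: linext_forms)

lemma incl_rmul: "incl (rmul r r') = amul \<theta> (incl r) (incl r')"
  by (simp add: linext_forms)

text \<open>\<open>R\<close> is commutative, so the source and target map \<open>incl\<close> has commuting range.\<close>
lemma incl_comm: "amul \<theta> (incl r) (incl r') = amul \<theta> (incl r') (incl r)"
  by (simp add: linext_forms, subst linext_swap, simp add: ac_simps)

lemma eps_bimodule: "eps (amul \<theta> (amul \<theta> (incl r1) (incl r2)) k) = rmul (rmul r1 (eps k)) r2"
  by (simp add: linext_forms, rule linext_cong, subst linext_swap, simp add: ac_simps)

lemma eps_aone: "eps aone = rone"
  by (simp add: linext_forms)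

lemma eps_amul: "eps (amul \<theta> k k') = eps (amul \<theta> k (incl (eps k')))"
  by (simp add: linext_forms)

text \<open>Counitality: \<open>\<epsilon>(U\<^sup>nV\<^sup>m) V\<^sup>m = U\<^sup>nV\<^sup>m = U\<^sup>nV\<^sup>m \<epsilon>(V\<^sup>m)\<close>.\<close>
lemma counit_left: "k \<in> finsupp \<Longrightarrow> lsum (map (\<lambda>(a, b). amul \<theta> (incl (eps a)) b) (delta k)) = k"
  by (subst lsum_map_delta) (simp_all add: linext_forms linext_mon_expansion)

lemma counit_right: "k \<in> finsupp \<Longrightarrow> lsum (map (\<lambda>(a, b). amul \<theta> (incl (eps b)) a) (delta k)) = k"
  by (subst lsum_map_delta) (simp_all add: linext_forms linext_mon_expansion)

text \<open>\<open>\<Delta>\<close> is unital and multiplicative, and coassociative; these already hold for the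
  coefficients of the representatives, before balancing.\<close>
lemma delta_aone: "delta aone = [(aone, aone)]"
  by (simp add: delta_def aone_def mon_def[abs_def] fsupp_def)

lemma delta_amul: "k \<in> finsupp \<Longrightarrow> k' \<in> finsupp \<Longrightarrow>
   emb (delta (amul \<theta> k k')) =
   emb (concat (map (\<lambda>(a, b). map (\<lambda>(a', b'). (amul \<theta> a a', amul \<theta> b b')) (delta k')) (delta k)))"
  by (simp add: expand_simps)

lemma coassociativity: "k \<in> finsupp \<Longrightarrow>
  teq3 (balRR \<theta>)
    (concat (map (\<lambda>(a, b). map (\<lambda>(c, d). (c, d, b)) (delta a)) (delta k)))
    (concat (map (\<lambda>(a, b). map (\<lambda>(c, d). (a, c, d)) (delta b)) (delta k)))"
  by (rule teq3_of_emb3_eq) (simp add: emb3_def map_concat expand_simps)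

text \<open>The elementary balancing relation of \<open>A\<^sub>\<theta> \<otimes>\<^bsub>R\<^esub> A\<^sub>\<theta>\<close> on monomials:
  \<open>U\<^sup>j U\<^sup>aV\<^sup>m \<otimes> U\<^sup>cV\<^sup>l = U\<^sup>aV\<^sup>m \<otimes> U\<^sup>j U\<^sup>cV\<^sup>l\<close>.\<close>
lemma balR_monomial_relation:
  assumes "fst x' - fst x = fst y' - fst y" "snd x' = snd x" "snd y' = snd y" "s1 = s2"
  shows "(\<lambda>z. s1 * mon (x', y) z - s2 * mon (x, y') z) \<in> cspan (balR \<theta>)"
proof -
  define j where "j = fst x' - fst x"
  have x': "x' = (fst x + j, snd x)" and y': "y' = (fst y + j, snd y)"
    using assms by (auto simp: prod_eq_iff j_def)
  have "(\<lambda>z. tens (amul \<theta> (incl (mon j)) (mon x)) (mon y) z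
            - tens (mon x) (amul \<theta> (incl (mon j)) (mon y)) z) \<in> balR \<theta>"
    unfolding balR_def by (rule CollectI, intro exI conjI) (auto simp: Alg_def Base_def)
  then have "(\<lambda>z. mon (x', y) z - mon (x, y') z) \<in> cspan (balR \<theta>)"
    unfolding x' y' by (simp add: linext_forms ac_simps cspan_gen)
  from cspan_scal[OF this, of s1] show ?thesis using assms(4) by (simp add: right_diff_distrib)
qed

lemma delta_bimodule: "k \<in> finsupp \<Longrightarrow> r1 \<in> finsupp \<Longrightarrow> r2 \<in> finsupp \<Longrightarrow>
  teq (balR \<theta>) (delta (amul \<theta> (amul \<theta> (incl r1) (incl r2)) k))
               (map (\<lambda>(a, b). (amul \<theta> (incl r1) a, amul \<theta> (incl r2) b)) (delta k))"
  unfolding teq_def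
  by (simp add: expand_simps, subst (2) linext_perm3(5)[symmetric])
     (simp add: linext_diff,
      intro cspan_linext balR_monomial_relation[where ?s1.0 = 1 and ?s2.0 = 1, simplified], auto)

lemma takeuchi: "k \<in> finsupp \<Longrightarrow> r \<in> finsupp \<Longrightarrow>
  teq (balR \<theta>) (map (\<lambda>(a, b). (amul \<theta> a (incl r), b)) (delta k))
               (map (\<lambda>(a, b). (a, amul \<theta> b (incl r))) (delta k))"
  unfolding teq_def
  by (simp add: expand_simps linext_diff, intro cspan_linext balR_monomial_relation, auto)

theorem left_bialgebroid: "left_bialgebroid_Atheta \<theta>"
  unfolding left_bialgebroid_Atheta_def Alg_def Base_def
  using incl_rone incl_rmul[of _ _ \<theta>] incl_comm[of \<theta>] delta_bimodule[of _ _ _ \<theta>]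
    eps_bimodule[of \<theta>] coassociativity[of _ \<theta>] counit_left[of _ \<theta>] counit_right[of _ \<theta>]
    takeuchi[of _ _ \<theta>] delta_aone teq_of_emb_eq[OF delta_amul] eps_aone eps_amul[of \<theta>]
  by (simp add: teq_of_emb_eq)

section \<open>The Galois map is bijective\<close>

text \<open>On coefficient functions, \<open>\<nu>(U\<^sup>aV\<^sup>m \<otimes> U\<^sup>cV\<^sup>d) = U\<^sup>aV\<^sup>m \<otimes> V\<^sup>mU\<^sup>cV\<^sup>d = q\<^sup>-\<^sup>m\<^sup>c U\<^sup>aV\<^sup>m \<otimes> U\<^sup>cV\<^sup>d\<^sup>+\<^sup>m\<close> is the
  following invertible twist.\<close>
definition twist :: "real \<Rightarrow> ((int \<times> int) \<times> (int \<times> int) \<Rightarrow> complex) \<Rightarrow> (int \<times> int) \<times> (int \<times> int) \<Rightarrow> complex" where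
  "twist \<theta> F z =
     qq \<theta> powi (- (snd (fst z) * fst (snd z))) * F (fst z, (fst (snd z), snd (snd z) - snd (fst z)))"

definition untwist :: "real \<Rightarrow> ((int \<times> int) \<times> (int \<times> int) \<Rightarrow> complex) \<Rightarrow> (int \<times> int) \<times> (int \<times> int) \<Rightarrow> complex" where
  "untwist \<theta> F z =
     qq \<theta> powi (snd (fst z) * fst (snd z)) * F (fst z, (fst (snd z), snd (snd z) + snd (fst z)))"

lemma twist_untwist: "twist \<theta> (untwist \<theta> F) = F"
  by (rule ext) (simp add: twist_def untwist_def power_int_add[symmetric])

lemma untwist_twist: "untwist \<theta> (twist \<theta> F) = F"
  by (rule ext) (simp add: twist_def untwist_def power_int_add[symmetric])

lemma twist_linear: "twist \<theta> (\<lambda>z. c * g z + x z) = (\<lambda>z. c * twist \<theta> g z + twist \<theta> x z)"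
  by (rule ext) (simp add: twist_def algebra_simps)

lemma untwist_linear: "untwist \<theta> (\<lambda>z. c * g z + x z) = (\<lambda>z. c * untwist \<theta> g z + untwist \<theta> x z)"
  by (rule ext) (simp add: untwist_def algebra_simps)

lemma twist_zero [simp]: "twist \<theta> (\<lambda>z. 0) = (\<lambda>z. 0)"
  by (rule ext) (simp add: twist_def)

lemma untwist_zero [simp]: "untwist \<theta> (\<lambda>z. 0) = (\<lambda>z. 0)"
  by (rule ext) (simp add: untwist_def)

lemma twist_add: "twist \<theta> (\<lambda>z. a z + b z) = (\<lambda>z. twist \<theta> a z + twist \<theta> b z)"
  using twist_linear[of \<theta> 1] by simp

lemma twist_linext [simp]: "twist \<theta> (linext F f) = linext (\<lambda>p. twist \<theta> (F p)) f"
  by (rule ext) (simp add: twist_def linext_def sum_distrib_left mult.left_commute)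

lemma untwist_linext [simp]: "untwist \<theta> (linext F f) = linext (\<lambda>p. untwist \<theta> (F p)) f"
  by (rule ext) (simp add: untwist_def linext_def sum_distrib_left mult.left_commute)

lemma twist_scal [simp]: "twist \<theta> (\<lambda>z. c * g z) = (\<lambda>z. c * twist \<theta> g z)"
  using twist_linear[of \<theta> c g "\<lambda>z. 0"] by simp

lemma twist_diff [simp]: "twist \<theta> (\<lambda>z. a z - b z) = (\<lambda>z. twist \<theta> a z - twist \<theta> b z)"
  by (rule ext) (simp add: twist_def right_diff_distrib)

lemma untwist_diff [simp]: "untwist \<theta> (\<lambda>z. a z - b z) = (\<lambda>z. untwist \<theta> a z - untwist \<theta> b z)"
  by (rule ext) (simp add: untwist_def right_diff_distrib)

lemma twist_mon [simp]:
  "twist \<theta> (mon (a, b)) = (\<lambda>z. qq \<theta> powi (- (snd a * fst b)) * mon (a, (fst b, snd b + snd a)) z)"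
  by (rule ext) (auto simp: twist_def mon_def)

lemma untwist_mon [simp]:
  "untwist \<theta> (mon (a, b)) = (\<lambda>z. qq \<theta> powi (snd a * fst b) * mon (a, (fst b, snd b - snd a)) z)"
  by (rule ext) (auto simp: untwist_def mon_def)

text \<open>The inverse twist only shifts the support.\<close>
lemma untwist_finsupp: "F \<in> finsupp \<Longrightarrow> untwist \<theta> F \<in> finsupp"
proof -
  assume F: "F \<in> finsupp"
  let ?shift = "\<lambda>z::(int \<times> int) \<times> (int \<times> int). (fst z, (fst (snd z), snd (snd z) - snd (fst z)))"
  have "fsupp (untwist \<theta> F) \<subseteq> ?shift ` fsupp F"
  proof
    fix z assume "z \<in> fsupp (untwist \<theta> F)"
    then have "(fst z, (fst (snd z), snd (snd z) + snd (fst z))) \<in> fsupp F"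
      by (simp add: fsupp_def untwist_def)
    then show "z \<in> ?shift ` fsupp F" by (rule rev_image_eqI) simp
  qed
  then show ?thesis using F by (auto simp: finsupp_def intro: finite_subset)
qed

lemma emb_nu_pure: "k \<in> finsupp \<Longrightarrow> k' \<in> finsupp \<Longrightarrow>
   emb (map (\<lambda>(a, b). (a, amul \<theta> b k')) (delta k)) = twist \<theta> (tens k k')"
proof -
  assume k: "k \<in> finsupp" and k': "k' \<in> finsupp"
  have "emb (map (\<lambda>(a, b). (a, amul \<theta> b (linext mon k'))) (delta k))
      = twist \<theta> (tens (linext mon k) (linext mon k'))"
    using k by (simp add: expand_simps, subst linext_swap, simp add: ac_simps)
  then show ?thesis using k k' by (simp add: linext_mon_expansion)
qed

lemma emb_nu: "tlist xs \<Longrightarrow> emb (nu \<theta> xs) = twist \<theta> (emb xs)"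
proof (induction xs)
  case Nil
  then show ?case by (simp add: nu_def twist_def)
next
  case (Cons x xs)
  obtain k k' where x: "x = (k, k')" by force
  have fin: "k \<in> finsupp" "k' \<in> finsupp" "tlist xs" using Cons.prems by (auto simp: tlist_def x)
  have "nu \<theta> (x # xs) = map (\<lambda>(a, b). (a, amul \<theta> b k')) (delta k) @ nu \<theta> xs"
    by (simp add: nu_def x)
  then show ?case using Cons.IH[OF fin(3)] emb_nu_pure[OF fin(1,2)]
    by (simp add: emb_append emb_Cons x twist_add)
qed

text \<open>The elementary balancing relation of \<open>A\<^sub>\<theta> \<otimes>\<^bsub>R\<^sup>o\<^sup>p\<^esub> A\<^sub>\<theta>\<close> on monomials:
  \<open>U\<^sup>aV\<^sup>mU\<^sup>j \<otimes> U\<^sup>cV\<^sup>l = U\<^sup>aV\<^sup>m \<otimes> U\<^sup>jU\<^sup>cV\<^sup>l\<close>, where \<open>U\<^sup>aV\<^sup>mU\<^sup>j = q\<^sup>-\<^sup>m\<^sup>j U\<^sup>a\<^sup>+\<^sup>jV\<^sup>m\<close>.\<close>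
lemma balRop_monomial_relation:
  assumes "fst x' - fst x = fst y' - fst y" "snd x' = snd x" "snd y' = snd y"
     "s1 = s2 * qq \<theta> powi (- (snd x * (fst x' - fst x)))"
  shows "(\<lambda>z. s1 * mon (x', y) z - s2 * mon (x, y') z) \<in> cspan (balRop \<theta>)"
proof -
  define j where "j = fst x' - fst x"
  have x': "x' = (fst x + j, snd x)" and y': "y' = (j + fst y, snd y)"
    using assms by (auto simp: prod_eq_iff j_def)
  have "(\<lambda>z. tens (amul \<theta> (mon x) (incl (mon j))) (mon y) z
            - tens (mon x) (amul \<theta> (incl (mon j)) (mon y)) z) \<in> balRop \<theta>"
    unfolding balRop_def by (rule CollectI, intro exI conjI) (auto simp: Alg_def Base_def)
  then have "(\<lambda>z. qq \<theta> powi (- (snd x * j)) * mon (x', y) z - mon (x, y') z) \<in> cspan (balRop \<theta>)"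
    unfolding x' y' by (simp add: linext_forms cspan_gen)
  from cspan_scal[OF this, of s2] show ?thesis
    using assms(4) by (simp add: right_diff_distrib mult.assoc j_def)
qed

lemma twist_balRop: "g \<in> balRop \<theta> \<Longrightarrow> twist \<theta> g \<in> cspan (balR \<theta>)"
proof -
  assume "g \<in> balRop \<theta>"
  then obtain r k k' where g: "g = (\<lambda>z. tens (amul \<theta> k (incl r)) k' z - tens k (amul \<theta> (incl r) k') z)"
    and fin: "k \<in> finsupp" "k' \<in> finsupp"
    by (auto simp: balRop_def Alg_def)
  have "twist \<theta> (\<lambda>z. tens (amul \<theta> (linext mon k) (incl r)) (linext mon k') z
                   - tens (linext mon k) (amul \<theta> (incl r) (linext mon k')) z) \<in> cspan (balR \<theta>)"
    by (simp add: linext_forms, subst (2) linext_perm3(3)[symmetric])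
       (simp add: linext_diff qq_powi_mult, intro cspan_linext balR_monomial_relation,
        auto simp: algebra_simps)
  then show ?thesis using fin by (simp add: g linext_mon_expansion)
qed

lemma untwist_balR: "g \<in> balR \<theta> \<Longrightarrow> untwist \<theta> g \<in> cspan (balRop \<theta>)"
proof -
  assume "g \<in> balR \<theta>"
  then obtain r k k' where g: "g = (\<lambda>z. tens (amul \<theta> (incl r) k) k' z - tens k (amul \<theta> (incl r) k') z)"
    and fin: "k \<in> finsupp" "k' \<in> finsupp"
    by (auto simp: balR_def Alg_def)
  have "untwist \<theta> (\<lambda>z. tens (amul \<theta> (incl r) (linext mon k)) (linext mon k') z
                     - tens (linext mon k) (amul \<theta> (incl r) (linext mon k')) z) \<in> cspan (balRop \<theta>)"
    by (simp add: linext_forms, subst (2) linext_perm3(2)[symmetric])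
       (simp add: linext_diff, intro cspan_linext balRop_monomial_relation,
        auto simp: qq_powi_mult algebra_simps power_int_add[symmetric])
  then show ?thesis using fin by (simp add: g linext_mon_expansion)
qed

lemma balR_finsupp: "balR \<theta> \<subseteq> finsupp"
  by (auto simp: balR_def Alg_def)

lemma balRop_finsupp: "balRop \<theta> \<subseteq> finsupp"
  by (auto simp: balRop_def Alg_def)

lemma nu_well_defined:
  assumes "tlist xs" "tlist ys" "teq (balRop \<theta>) xs ys"
  shows "teq (balR \<theta>) (nu \<theta> xs) (nu \<theta> ys)"
proof -
  have "twist \<theta> (\<lambda>z. emb xs z - emb ys z) \<in> cspan (balR \<theta>)"
    using assms(3)[unfolded teq_def] balRop_finsupp
    by (rule cspan_linear_image) (simp_all add: twist_linear twist_balRop)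
  then show ?thesis using assms(1,2) by (simp add: teq_def emb_nu)
qed

lemma nu_injective:
  assumes "tlist xs" "tlist ys" "teq (balR \<theta>) (nu \<theta> xs) (nu \<theta> ys)"
  shows "teq (balRop \<theta>) xs ys"
proof -
  have "untwist \<theta> (\<lambda>z. emb (nu \<theta> xs) z - emb (nu \<theta> ys) z) \<in> cspan (balRop \<theta>)"
    using assms(3)[unfolded teq_def] balR_finsupp
    by (rule cspan_linear_image) (simp_all add: untwist_linear untwist_balR)
  then show ?thesis using assms(1,2) by (simp add: teq_def emb_nu untwist_twist)
qed

text \<open>Surjectivity: expand the untwisted coefficients of the target in monomial tensors.\<close>
lemma nu_surjective: "tlist ys \<Longrightarrow> \<exists>xs. tlist xs \<and> teq (balR \<theta>) (nu \<theta> xs) ys"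
proof -
  assume ys: "tlist ys"
  define F where "F = untwist \<theta> (emb ys)"
  have F: "F \<in> finsupp" unfolding F_def by (rule untwist_finsupp, rule emb_finsupp, rule ys)
  define xs where "xs = map (\<lambda>w. ((\<lambda>u. F w * mon (fst w) u), mon (snd w))) (sorted_list_of_set (fsupp F))"
  have tl: "tlist xs" by (simp add: xs_def tlist_def)
  have "mon (fst w) (fst z) * mon (snd w) (snd z) = mon w z" for w z :: "(int \<times> int) \<times> (int \<times> int)"
    by (auto simp: mon_def prod_eq_iff)
  then have "emb xs = linext mon F"
    using F unfolding xs_def emb_map linext_def
    by (simp add: sum_list_sorted finsupp_def tens_def case_prod_unfold)
  also have "\<dots> = F" using F by (rule linext_mon_expansion)
  finally have "emb (nu \<theta> xs) = emb ys" using tl by (simp add: emb_nu F_def twist_untwist)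
  then show ?thesis using tl by (auto intro: teq_of_emb_eq)
qed

theorem left_Hopf: "left_Hopf_Atheta \<theta>"
  unfolding left_Hopf_Atheta_def
  using left_bialgebroid nu_well_defined nu_injective nu_surjective by blast

section \<open>\<open>\<delta>(U\<^sup>nV\<^sup>m) = q\<^sup>n\<^sup>m U\<^sup>n\<close> is a right character\<close>

lemma chi_amul_incl: "chi \<theta> (amul \<theta> k (incl r)) = rmul (chi \<theta> k) r"
  by (simp add: linext_forms linext_scal_in del: linext_scal_body, intro linext_cong ext)
     (simp add: qq_powi_mult qq_powi_add algebra_simps)

lemma chi_amul: "chi \<theta> (amul \<theta> k1 k2) = chi \<theta> (amul \<theta> (incl (chi \<theta> k1)) k2)"
  by (simp add: linext_forms linext_scal_in del: linext_scal_body, intro linext_cong ext)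
     (simp add: qq_powi_mult qq_powi_add algebra_simps)

lemma chi_aone: "chi \<theta> aone = rone"
  by (simp add: linext_forms)

theorem right_character: "right_character_Atheta \<theta> (chi \<theta>)"
  unfolding right_character_Atheta_def using chi_amul_incl chi_amul chi_aone by blast

section \<open>\<open>R\<close> is a right-left SAYD module\<close>

lemma emb_map_coact_sum: "m \<in> finsupp \<Longrightarrow> emb (map h (coact m)) =
   (\<lambda>z. \<Sum>n\<in>fsupp m. tens (fst (h (\<lambda>z. m n * mon (n, 0) z, rone)))
                             (snd (h (\<lambda>z. m n * mon (n, 0) z, rone))) z)"
  unfolding coact_def emb_map by (simp add: sum_list_sorted finsupp_def comp_def)

lemma emb_map_coact: "m \<in> finsupp \<Longrightarrow>
  (\<And>c n. tens (fst (h (\<lambda>z. c * mon (n, 0) z, rone))) (snd (h (\<lambda>z. c * mon (n, 0) z, rone)))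
     = (\<lambda>z. c * tens (fst (h (mon (n, 0), rone))) (snd (h (mon (n, 0), rone))) z)) \<Longrightarrow>
  emb (map h (coact m)) = linext (\<lambda>n. tens (fst (h (mon (n, 0), rone))) (snd (h (mon (n, 0), rone)))) m"
  by (simp add: emb_map_coact_sum linext_def)

lemma emb_coact: "m \<in> finsupp \<Longrightarrow> emb (coact m) = linext (\<lambda>n. mon ((n, 0), 0)) m"
  using emb_map_coact[of m id] by (simp add: rone_def)

lemma emb_concat_coact: "m \<in> finsupp \<Longrightarrow>
  (\<And>c n. emb (g (\<lambda>z. c * mon (n, 0) z, rone)) = (\<lambda>z. c * emb (g (mon (n, 0), rone)) z)) \<Longrightarrow>
  emb (concat (map g (coact m))) = linext (\<lambda>n. emb (g (mon (n, 0), rone))) m"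
  unfolding emb_concat coact_def by (simp add: comp_def sum_list_sorted finsupp_def linext_def)

lemma lsum_map_coact: "m \<in> finsupp \<Longrightarrow>
  (\<And>c n. g (\<lambda>z. c * mon (n, 0) z, rone) = (\<lambda>z. c * g (mon (n, 0), rone) z)) \<Longrightarrow>
  lsum (map g (coact m)) = linext (\<lambda>n. g (mon (n, 0), rone)) m"
  unfolding lsum_def coact_def by (simp add: comp_def sum_list_sorted finsupp_def linext_def)

lemmas coact_expand_simps = expand_simps emb_map_coact emb_coact emb_concat_coact lsum_map_coact

lemma act_aone: "m \<in> finsupp \<Longrightarrow> act \<theta> m aone = m"
  by (simp add: linext_forms linext_mon_expansion)

lemma act_act: "act \<theta> (act \<theta> m k) k' = act \<theta> m (amul \<theta> k k')"
  by (simp add: linext_forms linext_scal_in del: linext_scal_body, intro linext_cong ext)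
     (simp add: qq_powi_mult qq_powi_add algebra_simps)

lemma coact_tlist: "tlist (coact m)"
  by (simp add: coact_def tlist_def rone_def)

text \<open>Left \<open>R\<close>-linearity of the coaction, for the left action \<open>r \<cdot> m = m \<triangleleft> r\<close>.\<close>
lemma coact_R_linear: "m \<in> finsupp \<Longrightarrow> r \<in> finsupp \<Longrightarrow>
  teq (balKM \<theta>) (coact (act \<theta> m (incl r))) (map (\<lambda>(a, b). (amul \<theta> (incl r) a, b)) (coact m))"
  by (rule teq_of_emb_eq) (simp add: coact_expand_simps add.commute)

text \<open>Coassociativity, counitality, the compatibility \<open>\<epsilon>(m\<^sub>(\<^sub>-\<^sub>1\<^sub>)s(r))\<cdot>m\<^sub>(\<^sub>0\<^sub>) = m \<triangleleft> r\<close> and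
  stability are identities between coefficients of representatives.\<close>
lemma coact_coassociative: "m \<in> finsupp \<Longrightarrow>
  teq3 (balKKM \<theta>)
    (concat (map (\<lambda>(a, b). map (\<lambda>(c, d). (c, d, b)) (delta a)) (coact m)))
    (concat (map (\<lambda>(a, b). map (\<lambda>(c, d). (a, c, d)) (coact b)) (coact m)))"
  by (rule teq3_of_emb3_eq) (simp add: emb3_def map_concat coact_expand_simps)

lemma coact_counital: "m \<in> finsupp \<Longrightarrow> lsum (map (\<lambda>(a, b). act \<theta> b (incl (eps a))) (coact m)) = m"
  by (simp add: coact_expand_simps linext_mon_expansion)

lemma coact_eps_source: "m \<in> finsupp \<Longrightarrow> r \<in> finsupp \<Longrightarrow>
  lsum (map (\<lambda>(a, b). act \<theta> b (incl (eps (amul \<theta> a (incl r))))) (coact m)) = act \<theta> m (incl r)"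
  by (simp add: coact_expand_simps)

lemma coact_stable: "m \<in> finsupp \<Longrightarrow> lsum (map (\<lambda>(a, b). act \<theta> b a) (coact m)) = m"
  by (simp add: coact_expand_simps linext_mon_expansion)

text \<open>The right-hand side of the condition for a fixed first tensor leg \<open>k\<^sub>(\<^sub>1\<^sub>)\<close>, as a function
  of a representative \<open>ys\<close> of \<open>k\<^sup>- \<otimes> k\<^sup>+\<close>: \<open>k\<^sup>+ m\<^sub>(\<^sub>-\<^sub>1\<^sub>) k\<^sub>(\<^sub>1\<^sub>) \<otimes> m\<^sub>(\<^sub>0\<^sub>) k\<^sup>-\<close>.\<close>
definition ayd_rhs :: "real \<Rightarrow> base \<Rightarrow> alg \<Rightarrow> (alg \<times> alg) list \<Rightarrow> (alg \<times> base) list" where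
  "ayd_rhs \<theta> m k1 ys =
     concat (map (\<lambda>(km, kp). map (\<lambda>(a, b). (amul \<theta> (amul \<theta> kp a) k1, act \<theta> b km)) (coact m)) ys)"

definition ayd_lin :: "real \<Rightarrow> base \<Rightarrow> alg \<Rightarrow> ((int \<times> int) \<times> (int \<times> int) \<Rightarrow> complex) \<Rightarrow> (int \<times> int) \<times> int \<Rightarrow> complex" where
  "ayd_lin \<theta> m k1 = linext (\<lambda>w. emb (ayd_rhs \<theta> m k1 [(mon (fst w), mon (snd w))]))"

lemma emb_ayd_rhs_pure: "m \<in> finsupp \<Longrightarrow> km \<in> finsupp \<Longrightarrow> kp \<in> finsupp \<Longrightarrow>
   emb (ayd_rhs \<theta> m k1 [(km, kp)]) = ayd_lin \<theta> m k1 (tens km kp)"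
proof -
  assume fin: "m \<in> finsupp" "km \<in> finsupp" "kp \<in> finsupp"
  have "emb (ayd_rhs \<theta> m k1 [(linext mon km, linext mon kp)]) = ayd_lin \<theta> m k1 (tens (linext mon km) (linext mon kp))"
    unfolding ayd_lin_def ayd_rhs_def using fin(1)
    by (simp add: emb_map_coact mult.left_commute bilinearity, subst (2) linext_perm3(5)[symmetric],
        simp)
  then show ?thesis using fin by (simp add: linext_mon_expansion)
qed

lemma ayd_lin_linear: "g \<in> finsupp \<Longrightarrow> x \<in> finsupp \<Longrightarrow>
  ayd_lin \<theta> m k1 (\<lambda>z. c * g z + x z) = (\<lambda>z. c * ayd_lin \<theta> m k1 g z + ayd_lin \<theta> m k1 x z)"
  unfolding ayd_lin_def by (rule linext_linear)

lemma ayd_lin_zero: "ayd_lin \<theta> m k1 (\<lambda>z. 0) = (\<lambda>z. 0)"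
  by (simp add: ayd_lin_def)

lemma ayd_lin_diff: "g \<in> finsupp \<Longrightarrow> x \<in> finsupp \<Longrightarrow>
  ayd_lin \<theta> m k1 (\<lambda>z. g z - x z) = (\<lambda>z. ayd_lin \<theta> m k1 g z - ayd_lin \<theta> m k1 x z)"
  using ayd_lin_linear[of x g \<theta> m k1 "-1"] by (simp add: algebra_simps)

lemma emb_ayd_rhs: "m \<in> finsupp \<Longrightarrow> tlist ys \<Longrightarrow> emb (ayd_rhs \<theta> m k1 ys) = ayd_lin \<theta> m k1 (emb ys)"
proof (induction ys)
  case Nil
  then show ?case by (simp add: ayd_lin_zero ayd_rhs_def)
next
  case (Cons y ys)
  have fin: "fst y \<in> finsupp" "snd y \<in> finsupp" "tlist ys" using Cons.prems by (auto simp: tlist_def)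
  have "emb (ayd_rhs \<theta> m k1 (y # ys)) = (\<lambda>z. emb (ayd_rhs \<theta> m k1 [y]) z + emb (ayd_rhs \<theta> m k1 ys) z)"
    by (simp add: ayd_rhs_def emb_append)
  also have "\<dots> = (\<lambda>z. 1 * ayd_lin \<theta> m k1 (tens (fst y) (snd y)) z + ayd_lin \<theta> m k1 (emb ys) z)"
    using emb_ayd_rhs_pure[OF Cons.prems(1) fin(1,2), of \<theta> k1] Cons.IH[OF Cons.prems(1) fin(3)]
    by simp
  also have "\<dots> = ayd_lin \<theta> m k1 (emb (y # ys))"
    using ayd_lin_linear[of "tens (fst y) (snd y)" "emb ys" \<theta> m k1 1] emb_finsupp[OF fin(3)] fin
    by (simp add: emb_Cons)
  finally show ?case .
qed

lemma balKM_relation: "r \<in> finsupp \<Longrightarrow> X \<in> finsupp \<Longrightarrow> Y \<in> finsupp \<Longrightarrow>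
  (\<lambda>z. tens X (act \<theta> Y (incl r)) z - tens (amul \<theta> (incl r) X) Y z) \<in> cspan (balKM \<theta>)"
proof -
  assume "r \<in> finsupp" "X \<in> finsupp" "Y \<in> finsupp"
  then have "(\<lambda>z. tens (amul \<theta> (incl r) X) Y z - tens X (act \<theta> Y (incl r)) z) \<in> balKM \<theta>"
    unfolding balKM_def by (auto simp: Alg_def Base_def)
  from cspan_scal[OF cspan_gen[OF this], of "-1"] show ?thesis by (simp add: algebra_simps)
qed

text \<open>The balancing relations of \<open>\<otimes>\<^bsub>R\<^sup>o\<^sup>p\<^esub>\<close> are sent to those of \<open>A\<^sub>\<theta> \<otimes>\<^bsub>R\<^esub> R\<close>:
  \<open>k\<^sup>+ m\<^sub>(\<^sub>-\<^sub>1\<^sub>) k\<^sub>(\<^sub>1\<^sub>) \<otimes> m\<^sub>(\<^sub>0\<^sub>)(k\<^sup>- \<t>(r)) = \<t>(r)k\<^sup>+ m\<^sub>(\<^sub>-\<^sub>1\<^sub>) k\<^sub>(\<^sub>1\<^sub>) \<otimes> m\<^sub>(\<^sub>0\<^sub>)k\<^sup>-\<close>.\<close>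
lemma ayd_lin_balRop: "m \<in> finsupp \<Longrightarrow> g \<in> balRop \<theta> \<Longrightarrow> ayd_lin \<theta> m k1 g \<in> cspan (balKM \<theta>)"
proof -
  assume m: "m \<in> finsupp" and "g \<in> balRop \<theta>"
  then obtain r k k' where g: "g = (\<lambda>z. tens (amul \<theta> k (incl r)) k' z - tens k (amul \<theta> (incl r) k') z)"
    and fin: "r \<in> finsupp" "k \<in> finsupp" "k' \<in> finsupp"
    by (auto simp: balRop_def Alg_def Base_def)
  let ?a = "\<lambda>n. amul \<theta> (amul \<theta> k' (\<lambda>z. m n * mon (n, 0) z)) k1"
  have "ayd_lin \<theta> m k1 g = (\<lambda>z. emb (ayd_rhs \<theta> m k1 [(amul \<theta> k (incl r), k')]) z
                             - emb (ayd_rhs \<theta> m k1 [(k, amul \<theta> (incl r) k')]) z)"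
    unfolding g using fin m by (simp add: ayd_lin_diff emb_ayd_rhs_pure)
  also have "\<dots> = (\<lambda>z. \<Sum>n\<in>fsupp m. tens (?a n) (act \<theta> (act \<theta> rone k) (incl r)) z
                                    - tens (amul \<theta> (incl r) (?a n)) (act \<theta> rone k) z)"
    using m by (simp add: ayd_rhs_def emb_map_coact_sum act_act amul_assoc sum_subtractf)
  also have "\<dots> \<in> cspan (balKM \<theta>)"
    by (rule cspan_sum, rule balKM_relation) (use fin in auto)
  finally show ?thesis .
qed

lemma ayd_rhs_well_defined:
  assumes "m \<in> finsupp" "tlist ys" "tlist ys'" "teq (balRop \<theta>) ys ys'"
  shows "(\<lambda>z. emb (ayd_rhs \<theta> m k1 ys) z - emb (ayd_rhs \<theta> m k1 ys') z) \<in> cspan (balKM \<theta>)"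
proof -
  have "ayd_lin \<theta> m k1 (\<lambda>z. emb ys z - emb ys' z) \<in> cspan (balKM \<theta>)"
    using assms(4)[unfolded teq_def] balRop_finsupp
    by (rule cspan_linear_image) (auto simp: ayd_lin_linear ayd_lin_zero ayd_lin_balRop assms(1))
  then show ?thesis using assms(1-3) by (simp add: emb_ayd_rhs ayd_lin_diff emb_finsupp)
qed

text \<open>The canonical representative \<open>V\<^sup>j \<otimes> V\<^sup>-\<^sup>j\<close> of \<open>\<nu>\<^sup>-\<^sup>1(V\<^sup>j \<otimes> 1)\<close>; every other representative is
  equivalent to it by injectivity of \<open>\<nu>\<close>.\<close>
definition galois_inv_V :: "int \<Rightarrow> (alg \<times> alg) list" where
  "galois_inv_V j = [(mon (0, j), mon (0, - j))]"

lemma galois_inv_V_tlist: "tlist (galois_inv_V j)"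
  by (simp add: galois_inv_V_def tlist_def)

lemma nu_galois_inv_V: "teq (balR \<theta>) (nu \<theta> (galois_inv_V j)) [(mon (0, j), aone)]"
  by (rule teq_of_emb_eq) (simp add: emb_nu galois_inv_V_tlist, simp add: galois_inv_V_def aone_def)

lemma galois_inv_V_unique:
  assumes "tlist ys" "teq (balR \<theta>) (nu \<theta> ys) [(mon (0, j), aone)]"
  shows "teq (balRop \<theta>) ys (galois_inv_V j)"
proof -
  have "teq (balR \<theta>) (nu \<theta> ys) (nu \<theta> (galois_inv_V j))"
    using assms(2) nu_galois_inv_V[of \<theta> j] by (blast intro: teq_trans teq_sym)
  then show ?thesis using nu_injective assms(1) galois_inv_V_tlist by blast
qed

text \<open>With the canonical representatives the right-hand side is the coaction of \<open>m \<triangleleft> k\<close>: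
  \<open>V\<^sup>-\<^sup>j U\<^sup>n U\<^sup>aV\<^sup>j \<otimes> 1 \<triangleleft> V\<^sup>j = q\<^sup>(\<^sup>n\<^sup>+\<^sup>a\<^sup>)\<^sup>j U\<^sup>n\<^sup>+\<^sup>a \<otimes> 1\<close>.\<close>
lemma ayd_rhs_galois_inv_V: "m \<in> finsupp \<Longrightarrow> k \<in> finsupp \<Longrightarrow>
  (\<lambda>z. \<Sum>p\<in>fsupp k. emb (ayd_rhs \<theta> m (\<lambda>z. k p * mon p z) (galois_inv_V (snd p))) z)
  = emb (coact (act \<theta> m k))"
  by (simp add: ayd_rhs_def galois_inv_V_def coact_expand_simps linext_def[symmetric],
      subst linext_swap, intro linext_cong ext)
     (simp add: qq_powi_mult add.commute, rule disjI2, rule arg_cong[where f="power_int (qq \<theta>)"],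
      simp add: algebra_simps)

lemma anti_Yetter_Drinfeld:
  assumes tinv: "\<forall>k\<in>Alg. tlist (tinv k) \<and> teq (balR \<theta>) (nu \<theta> (tinv k)) [(k, aone)]"
    and m: "m \<in> finsupp" and k: "k \<in> finsupp"
  shows "teq (balKM \<theta>) (coact (act \<theta> m k))
           (concat (map (\<lambda>(k1, k2). concat (map (\<lambda>(km, kp).
               map (\<lambda>(a, b). (amul \<theta> (amul \<theta> kp a) k1, act \<theta> b km)) (coact m)) (tinv k2))) (delta k)))"
proof -
  have rhs: "emb (concat (map (\<lambda>(k1, k2). concat (map (\<lambda>(km, kp).
                map (\<lambda>(a, b). (amul \<theta> (amul \<theta> kp a) k1, act \<theta> b km)) (coact m)) (tinv k2))) (delta k)))
     = (\<lambda>z. \<Sum>p\<in>fsupp k. emb (ayd_rhs \<theta> m (\<lambda>z. k p * mon p z) (tinv (mon (0, snd p)))) z)"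
    unfolding emb_concat delta_def ayd_rhs_def using k
    by (simp add: comp_def sum_list_sorted finsupp_def emb_concat)
  have "(\<lambda>z. emb (ayd_rhs \<theta> m (\<lambda>z. k p * mon p z) (galois_inv_V (snd p))) z
           - emb (ayd_rhs \<theta> m (\<lambda>z. k p * mon p z) (tinv (mon (0, snd p)))) z) \<in> cspan (balKM \<theta>)" for p
  proof -
    have rep: "tlist (tinv (mon (0, snd p)))"
      "teq (balR \<theta>) (nu \<theta> (tinv (mon (0, snd p)))) [(mon (0, snd p), aone)]"
      using tinv by (auto simp: Alg_def)
    show ?thesis
      by (rule ayd_rhs_well_defined[OF m galois_inv_V_tlist rep(1)], rule teq_sym,
          rule galois_inv_V_unique[OF rep])
  qed
  then show ?thesis
    unfolding teq_def rhs ayd_rhs_galois_inv_V[OF m k, symmetric, of \<theta>]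
    by (simp add: sum_subtractf[symmetric] cspan_sum)
qed

theorem SAYD_module: "SAYD_Atheta \<theta> (act \<theta>) coact"
  unfolding SAYD_Atheta_def Base_def Alg_def
  using act_aone[of _ \<theta>] act_act[of \<theta>] coact_tlist coact_R_linear[of _ _ \<theta>]
    coact_coassociative[of _ \<theta>] coact_counital[of _ \<theta>] coact_eps_source[of _ _ \<theta>]
    anti_Yetter_Drinfeld[of _ \<theta>, unfolded Alg_def] coact_stable[of _ \<theta>]
  by blast

theorem mainTheorem6:
  fixes \<theta> :: real
  shows "left_Hopf_Atheta \<theta> \<and> right_character_Atheta \<theta> (chi \<theta>) \<and> SAYD_Atheta \<theta> (act \<theta>) coact"
  using left_Hopf right_character SAYD_module by blast

end
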